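(* Let $\nu>-1$ be real and let $0<a<b$ be two consecutive positive zeros of $J_\nu(\cdot;q^2)$. Then each of the functions $J_{\nu-1}(\cdot;q^2)$ and $J_{\nu+1}(\cdot;q^2)$ has at least one zero in the open interval $(a,b)$.
   Context: Fix $0<q<1$. For $a\in\mathbb C$ put $(a;q)_0=1$, $(a;q)_k=\prod_{i=0}^{k-1}(1-aq^i)$, $(a;q)_\infty=\prod_{i\ge0}(1-aq^i)$. For $\nu\in\mathbb C$ and $x\in\mathbb C\setminus\{0\}$ the Hahn–Exton $q$-Bessel function is $$J_\nu(x;q^2)=\frac{x^\nu}{(q^2;q^2)_\infty}\sum_{k=0}^\infty\frac{(-1)^kq^{k(k+1)}(q^{2\nu+2k+2};q^2)_\infty}{(q^2;q^2)_k}\,x^{2k},$$ with $x^\nu=\exp(\nu\operatorname{Log}x)$ (principal branch). *)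

theory Defs
  imports "HOL-Analysis.Analysis"
begin

definition qpoch :: "complex \<Rightarrow> real \<Rightarrow> nat \<Rightarrow> complex" where
  "qpoch a p k = (\<Prod>i<k. 1 - a * complex_of_real (p ^ i))"

definition qpoch_inf :: "complex \<Rightarrow> real \<Rightarrow> complex" where
  "qpoch_inf a p = (\<Prod>i. 1 - a * complex_of_real (p ^ i))"

definition ppow :: "complex \<Rightarrow> complex \<Rightarrow> complex" where
  "ppow x nu = exp (nu * Ln x)"

text \<open>Hahn--Exton q-Bessel function J_nu(x; q^2), for x \<noteq> 0.\<close>

definition hahn_exton_J :: "real \<Rightarrow> complex \<Rightarrow> complex \<Rightarrow> complex" where
  "hahn_exton_J q nu x =
     ppow x nu / qpoch_inf (complex_of_real (q^2)) (q^2) *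
     (\<Sum>k. (-1)^k * complex_of_real (q ^ (k * (k + 1))) *
           qpoch_inf (complex_of_real (q ^ (2 * k + 2)) * exp ((2 * nu) * Ln (complex_of_real q))) (q^2)
           / qpoch (complex_of_real (q^2)) (q^2) k * x ^ (2 * k))"

end

theory Submission
  imports Defs
begin

text \<open>
  Write r = q^(2 nu). For x > 0, J_nu(x; q^2) vanishes exactly where the even entire function
  f(x) = sum_k c_k x^(2k) of its defining series does, and f satisfies the q-difference equation
  f(x/q) + r f(qx) = (1 + r - x^2) f(x). Telescoping this equation gives a discrete Lommel identity:
  if f(alpha) = 0, then
    (beta^2 - alpha^2) sum_k (r q^2)^k f(alpha q^k) f(beta q^k) = f(alpha/q) f(beta),
  and the sum is positive for beta = alpha. So near a zero alpha > 0 the sign of f(alpha/q) f(beta)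
  is that of beta - alpha. As f keeps one sign between consecutive zeros a < b, this forces
  f(a/q) f(b/q) < 0. The contiguous relations x^2 f_(nu+1)(x) = f(x) - f(x/q) and
  f_(nu-1)(x) = f(x) - r f(qx) reduce to -f(x/q) and f(x/q) at the zeros of f, so both functions
  change sign on (a, b).
\<close>

lemma summable_powser_if_ratio_tendsto_zero:
  fixes c \<rho> :: "nat \<Rightarrow> real"
  assumes rec: "\<And>n. c (Suc n) = \<rho> n * c n" and lim: "\<rho> \<longlonglongrightarrow> 0"
  shows "summable (\<lambda>n. c n * t ^ n)"
proof -
  have "(\<lambda>n. \<bar>\<rho> n\<bar> * \<bar>t\<bar>) \<longlonglongrightarrow> 0 * \<bar>t\<bar>"
    using lim by (intro tendsto_mult tendsto_const) (simp add: tendsto_rabs_zero_iff)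
  then have "\<forall>\<^sub>F n in sequentially. \<bar>\<rho> n\<bar> * \<bar>t\<bar> < 1/2"
    by (intro order_tendstoD) auto
  then obtain N where N: "\<And>n. n \<ge> N \<Longrightarrow> \<bar>\<rho> n\<bar> * \<bar>t\<bar> < 1/2"
    by (auto simp: eventually_sequentially)
  show ?thesis
  proof (rule summable_ratio_test[of "1/2" N])
    fix n assume "N \<le> n"
    have "norm (c (Suc n) * t ^ Suc n) = \<bar>\<rho> n\<bar> * \<bar>t\<bar> * norm (c n * t ^ n)"
      by (simp add: rec abs_mult)
    also have "\<dots> \<le> 1/2 * norm (c n * t ^ n)"
      using N[OF \<open>N \<le> n\<close>] by (intro mult_right_mono) auto
    finally show "norm (c (Suc n) * t ^ Suc n) \<le> 1/2 * norm (c n * t ^ n)" .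
  qed simp
qed

lemma sign_change_imp_zero:
  fixes g :: "real \<Rightarrow> real"
  assumes cont: "\<And>x. isCont g x" and "a < b" and sign: "g a * g b < 0"
  shows "\<exists>x. a < x \<and> x < b \<and> g x = 0"
proof -
  have "\<exists>x. a \<le> x \<and> x \<le> b \<and> g x = 0"
    using IVT[of g a 0 b] IVT2[of g b 0 a] assms by (cases "g a < 0") (auto simp: mult_less_0_iff)
  moreover have "g a \<noteq> 0" "g b \<noteq> 0" using sign by auto
  ultimately show ?thesis by (metis order.not_eq_order_implies_strict)
qed

lemma same_sign_if_no_zero:
  fixes g :: "real \<Rightarrow> real"
  assumes cont: "\<And>x. isCont g x" and nz: "\<And>x. a < x \<Longrightarrow> x < b \<Longrightarrow> g x \<noteq> 0"
    and x: "a < x" "x < b" and y: "a < y" "y < b"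
  shows "0 < g x * g y"
proof (rule ccontr)
  assume "\<not> 0 < g x * g y"
  moreover have "g x \<noteq> 0" "g y \<noteq> 0" using nz x y by auto
  ultimately have neg: "g x * g y < 0" by (simp add: not_less le_less)
  then have "x \<noteq> y" by (auto simp: mult_less_0_iff)
  then consider "x < y" | "y < x" by linarith
  then show False
  proof cases
    case 1
    then show False using sign_change_imp_zero[OF cont 1 neg] nz x y by force
  next
    case 2
    then show False using sign_change_imp_zero[OF cont 2] neg nz x y by (force simp: mult.commute)
  qed
qed

(* For c = hahn_exton_coeff q r with r = q^(2 nu), the function f below is
   x^(-nu) (q^2;q^2)_inf J_nu(x; q^2); only the recurrence for c is used. *)
locale q_bessel_series =
  fixes q r :: real and c :: "nat \<Rightarrow> real"
  assumes q: "0 < q" "q < 1" and r: "0 < r" "r * q^2 < 1" and c0: "c 0 \<noteq> 0"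
    and coeff_rec:
      "\<And>k. c (Suc k) * (1 - (q^2)^Suc k) * (1 - r * (q^2)^Suc k) = - ((q^2)^Suc k) * c k"
begin

lemma q2: "0 < q^2" "q^2 < 1"
  using q by (auto simp: power_less_one_iff)

lemma summable_coeff: "summable (\<lambda>n. c n * t ^ n)"
proof -
  define D where "D k = (1 - (q^2)^Suc k) * (1 - r * (q^2)^Suc k)" for k
  have "0 < 1 - (q^2)^Suc k" for k
    using power_Suc_less_one[OF q2] by simp
  moreover have "0 < 1 - r * (q^2)^Suc k" for k
  proof -
    have "(q^2)^Suc k \<le> q^2"
      using q2 by (simp add: power_le_one)
    then show ?thesis
      using r mult_left_mono[of "(q^2)^Suc k" "q^2" r] by linarith
  qed
  ultimately have "D k \<noteq> 0" for k
    unfolding D_def by (metis less_irrefl mult_eq_0_iff)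
  moreover have "c (Suc k) * D k = - ((q^2)^Suc k) * c k" for k
    using coeff_rec[of k] by (simp add: D_def mult.assoc)
  ultimately have rec: "c (Suc k) = (- ((q^2)^Suc k) / D k) * c k" for k
    by (simp add: field_simps)
  have "(\<lambda>k. (q^2)^Suc k) \<longlonglongrightarrow> 0"
    using q2 by (intro LIMSEQ_Suc LIMSEQ_power_zero) auto
  then have "(\<lambda>k. - ((q^2)^Suc k) / D k) \<longlonglongrightarrow> - 0 / ((1 - 0) * (1 - r * 0))"
    unfolding D_def by (intro tendsto_intros) auto
  with rec show ?thesis
    by (intro summable_powser_if_ratio_tendsto_zero) auto
qed

definition F :: "real \<Rightarrow> real" where "F t = (\<Sum>n. c n * t ^ n)"

definition f :: "real \<Rightarrow> real" where "f x = F (x^2)"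

lemma F_sums: "(\<lambda>n. c n * t ^ n) sums F t"
  unfolding F_def using summable_coeff by (rule summable_sums)

lemma isCont_F: "isCont F t"
  unfolding F_def[abs_def] using summable_coeff by (rule isCont_powser_converges_everywhere)

lemma isCont_f: "isCont f x"
  unfolding f_def[abs_def] by (intro continuous_intros isCont_o2[OF _ isCont_F])

lemma f_0: "f 0 = c 0"
  by (simp add: f_def F_def)

lemma F_qdifference: "F (t / q^2) + r * F (q^2 * t) = (1 + r - t) * F t"
proof -
  define p where "p = q^2"
  have p: "0 < p" using q2 by (simp add: p_def)
  define e where "e n = c n * (t/p)^n + r * (c n * (p*t)^n) - (1+r) * (c n * t^n)" for n
  have "e sums (F (t/p) + r * F (p*t) - (1+r) * F t)"
    unfolding e_def by (intro sums_diff sums_add sums_mult F_sums)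
  moreover have "e 0 = 0" by (simp add: e_def algebra_simps)
  ultimately have "(\<lambda>n. e (Suc n)) sums (F (t/p) + r * F (p*t) - (1+r) * F t)"
    by (simp add: sums_Suc_iff)
  moreover have "e (Suc n) = - t * (c n * t ^ n)" for n
  proof -
    have "e (Suc n) = c (Suc n) * (1 - p ^ Suc n) * (1 - r * p ^ Suc n) * t ^ Suc n / p ^ Suc n"
      unfolding e_def using p by (simp add: field_simps)
    then show ?thesis
      using coeff_rec[of n] p by (simp add: p_def)
  qed
  then have "(\<lambda>n. e (Suc n)) sums (- t * F t)"
    by (simp only:) (intro sums_mult F_sums)
  ultimately have "F (t/p) + r * F (p*t) - (1+r) * F t = - t * F t"
    by (rule sums_unique2)
  then have "F (t/p) + r * F (p*t) = (1 + r - t) * F t"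
    by (simp add: algebra_simps)
  then show ?thesis
    by (simp only: p_def)
qed

lemma f_qdifference: "f (x / q) + r * f (q * x) = (1 + r - x^2) * f x"
  using F_qdifference[of "x^2"] by (simp add: f_def power_divide power_mult_distrib)

definition g :: "real \<Rightarrow> real" where "g x = (\<Sum>n. c (Suc n) * (x^2) ^ n)"

lemma f_eq_head_tail: "f x = c 0 + x^2 * g x"
  using powser_split_head(1)[OF summable_coeff, of "x^2"]
  by (simp add: f_def F_def g_def mult.commute)

lemma isCont_g: "isCont g x"
proof -
  have "isCont (\<lambda>t. \<Sum>n. c (Suc n) * t ^ n) (x^2)"
    by (rule isCont_powser_converges_everywhere) (rule powser_split_head(3)[OF summable_coeff])
  then show ?thesis
    unfolding g_def[abs_def] by (rule isCont_o2[rotated]) (intro continuous_intros)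
qed

(* A q-Casorati determinant of f(alpha x) and f(beta x); casorati_step is the q-analogue of
   the Lommel identity for their Wronskian. *)
definition casorati :: "real \<Rightarrow> real \<Rightarrow> real \<Rightarrow> real" where
  "casorati \<alpha> \<beta> x = f (\<alpha> * x / q) * f (\<beta> * x) - f (\<alpha> * x) * f (\<beta> * x / q)"

lemma casorati_step:
  "casorati \<alpha> \<beta> x - r * casorati \<alpha> \<beta> (q * x) = (\<beta>^2 - \<alpha>^2) * x^2 * f (\<alpha> * x) * f (\<beta> * x)"
proof -
  have shift: "\<gamma> * (q * x) / q = \<gamma> * x" for \<gamma>
    using q by simp
  have qdiff: "f (\<gamma> * x / q) = (1 + r - (\<gamma> * x)^2) * f (\<gamma> * x) - r * f (\<gamma> * (q * x))" for \<gamma>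
    using f_qdifference[of "\<gamma> * x"] by (simp add: mult.left_commute)
  show ?thesis
    unfolding casorati_def shift qdiff by (simp add: algebra_simps power2_eq_square)
qed

lemma casorati_telescope:
  "(\<beta>^2 - \<alpha>^2) * (\<Sum>k<N. (r * q^2)^k * (f (\<alpha> * q^k) * f (\<beta> * q^k)))
     = casorati \<alpha> \<beta> 1 - r^N * casorati \<alpha> \<beta> (q^N)"
proof (induction N)
  case (Suc N)
  have "(\<beta>^2 - \<alpha>^2) * (\<Sum>k<Suc N. (r * q^2)^k * (f (\<alpha> * q^k) * f (\<beta> * q^k)))
      = casorati \<alpha> \<beta> 1 - r^N * casorati \<alpha> \<beta> (q^N)
        + r^N * ((\<beta>^2 - \<alpha>^2) * (q^N)^2 * f (\<alpha> * q^N) * f (\<beta> * q^N))"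
    using Suc.IH by (simp add: algebra_simps power2_eq_square)
  also have "\<dots> = casorati \<alpha> \<beta> 1 - r^Suc N * casorati \<alpha> \<beta> (q^Suc N)"
    unfolding casorati_step[symmetric] by (simp add: algebra_simps)
  finally show ?case .
qed simp

(* r may exceed 1 (when nu < 0): the factor x^2 is what makes r^N casorati (q^N) vanish,
   since r q^2 < 1. *)
lemma casorati_eq_square_mult: "\<exists>E. (\<forall>x. isCont E x) \<and> (\<forall>x. casorati \<alpha> \<beta> x = x^2 * E x)"
proof -
  define P where
    "P u v x = c 0 * (u^2 * g (u * x) + v^2 * g (v * x)) + x^2 * u^2 * v^2 * g (u * x) * g (v * x)"
    for u v x
  have prod: "f (u * x) * f (v * x) = (c 0)^2 + x^2 * P u v x" for u v x
    unfolding f_eq_head_tail P_def by (simp add: algebra_simps power2_eq_square)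
  have "casorati \<alpha> \<beta> x = x^2 * (P (\<alpha> / q) \<beta> x - P \<alpha> (\<beta> / q) x)" for x
    using prod[of "\<alpha> / q" x \<beta>] prod[of \<alpha> x "\<beta> / q"] unfolding casorati_def
    by (simp add: algebra_simps)
  moreover have "isCont (\<lambda>x. P (\<alpha> / q) \<beta> x - P \<alpha> (\<beta> / q) x) x" for x
    unfolding P_def by (intro continuous_intros isCont_o2[OF _ isCont_g])
  ultimately show ?thesis by blast
qed

lemma casorati_tendsto_zero: "(\<lambda>N. r^N * casorati \<alpha> \<beta> (q^N)) \<longlonglongrightarrow> 0"
proof -
  obtain E where E: "\<And>x. isCont E x" "\<And>x. casorati \<alpha> \<beta> x = x^2 * E x"
    using casorati_eq_square_mult by blast
  have "(\<lambda>N. E (q^N)) \<longlonglongrightarrow> E 0"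
    using q by (intro isCont_tendsto_compose[OF E(1)] LIMSEQ_power_zero) auto
  moreover have "(\<lambda>N. (r * q^2)^N) \<longlonglongrightarrow> 0"
    using r q by (intro LIMSEQ_power_zero) auto
  ultimately have "(\<lambda>N. (r * q^2)^N * E (q^N)) \<longlonglongrightarrow> 0 * E 0"
    by (intro tendsto_mult)
  then show ?thesis
    by (simp add: E(2) power_mult_distrib power_mult[symmetric] mult.commute[of 2] mult.assoc)
qed

(* For r = q^(2 nu), (1 - q) qinner alpha beta is the Jackson integral of
   t^(2 nu + 1) f(alpha t) f(beta t) over [0, 1]. *)
definition qinner :: "real \<Rightarrow> real \<Rightarrow> real" where
  "qinner \<alpha> \<beta> = (\<Sum>k. (r * q^2)^k * (f (\<alpha> * q^k) * f (\<beta> * q^k)))"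

lemma f_bounded: "\<exists>B. \<forall>x. \<bar>x\<bar> \<le> X \<longrightarrow> \<bar>f x\<bar> \<le> B"
proof -
  have "compact (f ` {-X..X})"
    by (intro compact_continuous_image continuous_at_imp_continuous_on ballI isCont_f) auto
  then obtain B where "\<forall>y \<in> f ` {-X..X}. norm y \<le> B"
    using compact_imp_bounded bounded_iff by blast
  then have "\<bar>f x\<bar> \<le> B" if "\<bar>x\<bar> \<le> X" for x
    using that by (auto simp: abs_le_iff)
  then show ?thesis
    by blast
qed

lemma uniform_limit_qinner:
  assumes "\<bar>\<alpha>\<bar> \<le> X"
  shows "uniform_limit {-X..X} (\<lambda>n \<beta>. \<Sum>k<n. (r * q^2)^k * (f (\<alpha> * q^k) * f (\<beta> * q^k)))
           (qinner \<alpha>) sequentially"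
proof -
  obtain B where B: "\<And>x. \<bar>x\<bar> \<le> X \<Longrightarrow> \<bar>f x\<bar> \<le> B"
    using f_bounded by blast
  have small: "\<bar>x * q^k\<bar> \<le> X" if "\<bar>x\<bar> \<le> X" for x k
  proof -
    have "\<bar>x\<bar> * q^k \<le> \<bar>x\<bar>"
      using q by (simp add: mult_left_le power_le_one)
    then show ?thesis
      using that q by (simp add: abs_mult)
  qed
  have "\<bar>f (\<alpha> * q^k) * f (\<beta> * q^k)\<bar> \<le> B * B" if "\<beta> \<in> {-X..X}" for \<beta> k
    using B[OF small[OF assms]] B[OF small, of \<beta>] that unfolding abs_mult
    by (intro mult_mono) (auto intro: order_trans[OF abs_ge_zero])
  then have "norm ((r * q^2)^k * (f (\<alpha> * q^k) * f (\<beta> * q^k))) \<le> (r * q^2)^k * (B * B)"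
    if "\<beta> \<in> {-X..X}" for \<beta> k
    using that r by (simp add: abs_mult[of "(r * q^2)^k"] mult_left_mono)
  moreover have "summable (\<lambda>k. (r * q^2)^k * (B * B))"
    using r by (intro summable_mult2 summable_geometric) auto
  ultimately show ?thesis
    unfolding qinner_def[abs_def] by (rule Weierstrass_m_test)
qed

lemma qinner_sums: "(\<lambda>k. (r * q^2)^k * (f (\<alpha> * q^k) * f (\<beta> * q^k))) sums qinner \<alpha> \<beta>"
  unfolding sums_def
  by (rule tendsto_uniform_limitI[OF uniform_limit_qinner[of \<alpha> "\<bar>\<alpha>\<bar> + \<bar>\<beta>\<bar>"]]) auto

lemma isCont_qinner: "isCont (qinner \<alpha>) \<beta>"
proof -
  define X where "X = \<bar>\<alpha>\<bar> + \<bar>\<beta>\<bar> + 1"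
  have "continuous_on {-X..X} (\<lambda>\<beta>. \<Sum>k<n. (r * q^2)^k * (f (\<alpha> * q^k) * f (\<beta> * q^k)))" for n
    by (intro continuous_at_imp_continuous_on ballI continuous_intros isCont_o2[OF _ isCont_f])
  then have "continuous_on {-X..X} (qinner \<alpha>)"
    by (intro uniform_limit_theorem[OF _ uniform_limit_qinner]) (auto simp: X_def)
  moreover have "\<beta> \<in> interior {-X..X}"
    by (auto simp: X_def)
  ultimately show ?thesis
    using continuous_on_interior by blast
qed

lemma qinner_eq_casorati: "(\<beta>^2 - \<alpha>^2) * qinner \<alpha> \<beta> = casorati \<alpha> \<beta> 1"
proof -
  have "(\<lambda>N. (\<beta>^2 - \<alpha>^2) * (\<Sum>k<N. (r * q^2)^k * (f (\<alpha> * q^k) * f (\<beta> * q^k))))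
          \<longlonglongrightarrow> (\<beta>^2 - \<alpha>^2) * qinner \<alpha> \<beta>"
    using qinner_sums unfolding sums_def by (intro tendsto_mult tendsto_const)
  moreover have "(\<lambda>N. casorati \<alpha> \<beta> 1 - r^N * casorati \<alpha> \<beta> (q^N)) \<longlonglongrightarrow> casorati \<alpha> \<beta> 1 - 0"
    by (intro tendsto_diff tendsto_const casorati_tendsto_zero)
  ultimately show ?thesis
    unfolding casorati_telescope by (simp add: LIMSEQ_unique)
qed

lemma qinner_self_pos: "0 < qinner \<alpha> \<alpha>"
proof -
  have "(\<lambda>k. f (\<alpha> * q^k)) \<longlonglongrightarrow> f (\<alpha> * 0)"
    using q
    by (intro isCont_tendsto_compose[OF isCont_f] tendsto_mult tendsto_const LIMSEQ_power_zero) auto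
  then have "\<forall>\<^sub>F k in sequentially. f (\<alpha> * q^k) \<noteq> 0"
    using c0 f_0 by (intro tendsto_imp_eventually_ne) auto
  then obtain k where "f (\<alpha> * q^k) \<noteq> 0"
    by (auto simp: eventually_sequentially)
  then have "0 < f (\<alpha> * q^k) * f (\<alpha> * q^k)"
    by (metis not_real_square_gt_zero)
  then have "0 < (r * q^2)^k * (f (\<alpha> * q^k) * f (\<alpha> * q^k))"
    using r q by simp
  moreover have "0 \<le> (r * q^2)^n * (f (\<alpha> * q^n) * f (\<alpha> * q^n))" for n
    using r q by simp
  ultimately show ?thesis
    unfolding qinner_def by (intro suminf_pos2[OF sums_summable[OF qinner_sums]])
qed

lemma eventually_sign_near_zero:
  assumes "f \<alpha> = 0"
  shows "\<forall>\<^sub>F \<beta> in at \<alpha>. 0 < f (\<alpha> / q) * f \<beta> * (\<beta>^2 - \<alpha>^2)"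
proof -
  have "\<alpha> \<noteq> 0"
    using assms f_0 c0 by auto
  then have "\<forall>\<^sub>F \<beta> in nhds \<alpha>. \<beta> \<noteq> - \<alpha>"
    by (intro t1_space_nhds) simp
  then have "\<forall>\<^sub>F \<beta> in at \<alpha>. \<beta>^2 - \<alpha>^2 \<noteq> 0"
    by (auto simp: eventually_at_filter power2_eq_iff elim: eventually_mono)
  moreover have "\<forall>\<^sub>F \<beta> in at \<alpha>. 0 < qinner \<alpha> \<beta>"
    using isCont_qinner[of \<alpha> \<alpha>] qinner_self_pos unfolding isCont_def by (rule order_tendstoD)
  ultimately have "\<forall>\<^sub>F \<beta> in at \<alpha>. 0 < (\<beta>^2 - \<alpha>^2) * ((\<beta>^2 - \<alpha>^2) * qinner \<alpha> \<beta>)"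
    by eventually_elim (simp add: mult.assoc[symmetric] power2_eq_square[symmetric])
  moreover have "(\<beta>^2 - \<alpha>^2) * qinner \<alpha> \<beta> = f (\<alpha> / q) * f \<beta>" for \<beta>
    using qinner_eq_casorati[of \<beta> \<alpha>] assms by (simp add: casorati_def)
  ultimately show ?thesis
    by (simp add: mult.commute)
qed

lemma sign_right_of_zero:
  assumes "f a = 0" "0 < a" "a < b"
  obtains x where "a < x" "x < b" "0 < f (a / q) * f x"
proof -
  have "\<forall>\<^sub>F x in at_right a. 0 < f (a / q) * f x * (x^2 - a^2)"
    using eventually_sign_near_zero[OF assms(1)] by (simp add: eventually_at_split)
  moreover have "\<forall>\<^sub>F x in at_right a. a < x \<and> x < b"
    using assms by (intro eventually_at_rightI[of a b]) auto
  ultimately have "\<forall>\<^sub>F x in at_right a. a < x \<and> x < b \<and> 0 < f (a / q) * f x * (x^2 - a^2)"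
    by eventually_elim auto
  then obtain x where "a < x" "x < b" "0 < f (a / q) * f x * (x^2 - a^2)"
    using eventually_happens'[OF trivial_limit_at_right_real] by blast
  moreover have "0 < x^2 - a^2"
    using assms \<open>a < x\<close> by (simp add: power_strict_mono)
  ultimately show ?thesis
    using that by (simp add: zero_less_mult_iff)
qed

lemma sign_left_of_zero:
  assumes "f b = 0" "0 < a" "a < b"
  obtains y where "a < y" "y < b" "f (b / q) * f y < 0"
proof -
  have "\<forall>\<^sub>F y in at_left b. 0 < f (b / q) * f y * (y^2 - b^2)"
    using eventually_sign_near_zero[OF assms(1)] by (simp add: eventually_at_split)
  moreover have "\<forall>\<^sub>F y in at_left b. a < y \<and> y < b"
    using assms by (intro eventually_at_leftI[of a b]) auto
  ultimately have "\<forall>\<^sub>F y in at_left b. a < y \<and> y < b \<and> 0 < f (b / q) * f y * (y^2 - b^2)"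
    by eventually_elim auto
  then obtain y where "a < y" "y < b" "0 < f (b / q) * f y * (y^2 - b^2)"
    using eventually_happens'[OF trivial_limit_at_left_real] by blast
  moreover have "y^2 - b^2 < 0"
    using assms \<open>a < y\<close> \<open>y < b\<close> by (simp add: power_strict_mono)
  ultimately show ?thesis
    using that by (simp add: zero_less_mult_iff)
qed

lemma scaled_zeros_opposite_sign:
  assumes ab: "0 < a" "a < b" and fa: "f a = 0" and fb: "f b = 0"
    and nz: "\<And>x. a < x \<Longrightarrow> x < b \<Longrightarrow> f x \<noteq> 0"
  shows "f (a / q) * f (b / q) < 0"
proof -
  obtain x where x: "a < x" "x < b" and left: "0 < f (a / q) * f x"
    using sign_right_of_zero[OF fa ab] .
  obtain y where y: "a < y" "y < b" and right: "f (b / q) * f y < 0"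
    using sign_left_of_zero[OF fb ab] .
  have "0 < f x * f y"
    using same_sign_if_no_zero[OF isCont_f nz x y] .
  moreover have "(f (a / q) * f (b / q)) * (f x * f y) < 0"
    using mult_pos_neg[OF left right] by (simp add: ac_simps)
  ultimately show ?thesis
    by (auto simp: mult_less_0_iff zero_less_mult_iff)
qed

lemma zeros_of_q_shifted_differences:
  assumes "0 < a" "a < b" and fa: "f a = 0" and fb: "f b = 0"
    and "\<And>x. a < x \<Longrightarrow> x < b \<Longrightarrow> f x \<noteq> 0"
  shows "\<exists>x. a < x \<and> x < b \<and> f x = f (x / q)"
    and "\<exists>x. a < x \<and> x < b \<and> f x = r * f (q * x)"
proof -
  have opposite: "f (a / q) * f (b / q) < 0"
    using scaled_zeros_opposite_sign assms by blast
  have "r * f (q * y) = - f (y / q)" if "f y = 0" for y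
    using f_qdifference[of y] that by simp
  then have "(f a - r * f (q * a)) * (f b - r * f (q * b)) < 0"
    using opposite fa fb by simp
  moreover have "isCont (\<lambda>x. f x - r * f (q * x)) x" for x
    by (intro continuous_intros isCont_o2[OF _ isCont_f] isCont_f)
  ultimately show "\<exists>x. a < x \<and> x < b \<and> f x = r * f (q * x)"
    using sign_change_imp_zero[of "\<lambda>x. f x - r * f (q * x)"] \<open>a < b\<close> by auto
  have "(f a - f (a / q)) * (f b - f (b / q)) < 0"
    using opposite fa fb by simp
  moreover have "isCont (\<lambda>x. f x - f (x / q)) x" for x
    using q by (intro continuous_intros isCont_o2[OF _ isCont_f] isCont_f) auto
  ultimately show "\<exists>x. a < x \<and> x < b \<and> f x = f (x / q)"
    using sign_change_imp_zero[of "\<lambda>x. f x - f (x / q)"] \<open>a < b\<close> by auto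
qed

lemma contiguous_relation_lower:
  assumes "\<And>k. d k = c k * (1 - r * (q^2)^k)"
  shows "(\<lambda>k. d k * (y^2)^k) sums (f y - r * f (q * y))"
proof -
  have "(\<lambda>k. c k * (y^2)^k - r * (c k * (q^2 * y^2)^k)) sums (F (y^2) - r * F (q^2 * y^2))"
    by (intro sums_diff sums_mult F_sums)
  then show ?thesis
    by (simp add: assms f_def algebra_simps)
qed

lemma contiguous_relation_raise:
  assumes d: "\<And>k. c (Suc k) * (1 - (q^2)^Suc k) = - ((q^2)^Suc k * d k)"
    and summable: "summable (\<lambda>k. d k * (y^2)^k)"
  shows "y^2 * (\<Sum>k. d k * (y^2)^k) = f y - f (y / q)"
proof -
  define t where "t = y^2"
  define e where "e n = c n * t^n - c n * (t / q^2)^n" for n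
  have "e sums (F t - F (t / q^2))"
    unfolding e_def by (intro sums_diff F_sums)
  moreover have "e 0 = 0"
    by (simp add: e_def)
  ultimately have "(\<lambda>n. e (Suc n)) sums (F t - F (t / q^2))"
    by (simp add: sums_Suc_iff)
  moreover have "e (Suc n) = t * (d n * t^n)" for n
  proof -
    have "e (Suc n) = - (c (Suc n) * (1 - (q^2)^Suc n)) * t^Suc n / (q^2)^Suc n"
      using q2 by (simp add: e_def field_simps)
    also have "\<dots> = t * (d n * t^n)"
      using q2 unfolding d by simp
    finally show ?thesis .
  qed
  then have "(\<lambda>n. e (Suc n)) sums (t * (\<Sum>k. d k * t^k))"
    using summable unfolding t_def[symmetric] by (simp only:) (intro sums_mult summable_sums)
  ultimately show ?thesis
    unfolding t_def f_def by (simp add: sums_unique2 power_divide)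
qed

end

definition real_qpoch_inf :: "real \<Rightarrow> real \<Rightarrow> real" where
  "real_qpoch_inf z p = (\<Prod>i. 1 - z * p ^ i)"

lemma convergent_prod_real_qpoch_inf:
  fixes p z :: real
  assumes "\<bar>p\<bar> < 1"
  shows "convergent_prod (\<lambda>i. 1 - z * p ^ i)"
proof -
  have "summable (\<lambda>i. \<bar>z\<bar> * \<bar>p\<bar> ^ i)"
    using assms by (intro summable_mult summable_geometric) simp
  then have "summable (\<lambda>i. norm ((1 - z * p ^ i) - 1))"
    by (simp add: abs_mult power_abs)
  then show ?thesis
    by (intro abs_convergent_prod_imp_convergent_prod summable_imp_abs_convergent_prod)
qed

lemma real_qpoch_inf_shift:
  assumes "\<bar>p\<bar> < 1"
  shows "real_qpoch_inf z p = (1 - z) * real_qpoch_inf (z * p) p"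
proof -
  have "(\<lambda>i. 1 - z * p ^ i) has_prod ((\<Prod>i<1. 1 - z * p ^ i) * (\<Prod>i. 1 - z * p ^ (i + 1)))"
    by (rule has_prod_ignore_initial_segment'[OF convergent_prod_real_qpoch_inf[OF assms]])
  then show ?thesis
    unfolding real_qpoch_inf_def by (simp add: has_prod_unique[symmetric] mult_ac)
qed

lemma real_qpoch_inf_nonzero:
  assumes "\<bar>p\<bar> < 1" "\<bar>z\<bar> < 1"
  shows "real_qpoch_inf z p \<noteq> 0"
  unfolding real_qpoch_inf_def
proof (rule prodinf_nonzero[OF convergent_prod_real_qpoch_inf[OF assms(1)]])
  fix i
  have "\<bar>z\<bar> * \<bar>p\<bar> ^ i \<le> \<bar>z\<bar>"
    using assms by (simp add: mult_left_le power_le_one)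
  then have "\<bar>z * p ^ i\<bar> < 1"
    using assms by (simp add: abs_mult power_abs)
  then show "1 - z * p ^ i \<noteq> 0"
    by auto
qed

lemma qpoch_inf_of_real:
  assumes "\<bar>p\<bar> < 1"
  shows "qpoch_inf (complex_of_real z) p = complex_of_real (real_qpoch_inf z p)"
proof -
  have "(\<lambda>i. 1 - z * p ^ i) has_prod real_qpoch_inf z p"
    unfolding real_qpoch_inf_def
    using convergent_prod_real_qpoch_inf[OF assms] by (simp add: convergent_prod_has_prod_iff)
  then have "(\<lambda>i. complex_of_real (1 - z * p ^ i)) has_prod complex_of_real (real_qpoch_inf z p)"
    by (subst has_prod_of_real_iff)
  then show ?thesis
    unfolding qpoch_inf_def by (simp add: has_prod_unique[symmetric])
qed

lemma prod_one_minus_power_pos: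
  fixes p :: real
  assumes "0 \<le> p" "p < 1"
  shows "0 < (\<Prod>i<k. 1 - p ^ Suc i)"
  using power_Suc_less_one[OF _ assms(2)] assms
  by (intro prod_pos) (auto simp: le_less)

(* The coefficient of x^(2k) in the series of hahn_exton_J, with q^(2 nu) abstracted to r. *)
definition hahn_exton_coeff :: "real \<Rightarrow> real \<Rightarrow> nat \<Rightarrow> real" where
  "hahn_exton_coeff q r k =
     (-1)^k * q^(k * (k + 1)) * real_qpoch_inf (r * (q^2)^Suc k) (q^2) / (\<Prod>i<k. 1 - (q^2)^Suc i)"

lemma hahn_exton_coeff_Suc:
  assumes "0 < q" "q < 1"
  shows "hahn_exton_coeff q r (Suc k) * (1 - (q^2)^Suc k)
           = - ((q^2)^Suc k * hahn_exton_coeff q (r * q^2) k)"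
proof -
  define P where "P = (\<Prod>i<k. 1 - (q^2)^Suc i)"
  define Q where "Q = real_qpoch_inf (r * q^2 * (q^2)^Suc k) (q^2)"
  have P: "0 < P"
    using assms prod_one_minus_power_pos[of "q^2" k] by (simp add: P_def power_less_one_iff)
  have factor: "0 < 1 - (q^2)^Suc k"
    using assms power_Suc_less_one[of "q^2" k] by (simp add: power_less_one_iff)
  have "Suc k * (Suc k + 1) = k * (k + 1) + 2 * Suc k"
    by simp
  then have power: "q^(Suc k * (Suc k + 1)) = q^(k * (k + 1)) * (q^2)^Suc k"
    by (simp only: power_add power_mult)
  have arg: "r * (q^2)^Suc (Suc k) = r * q^2 * (q^2)^Suc k"
    by simp
  show ?thesis
    unfolding hahn_exton_coeff_def prod.lessThan_Suc P_def[symmetric]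
    using P factor power arg by (simp add: Q_def[symmetric] field_simps)
qed

lemma hahn_exton_coeff_param_shift:
  assumes "0 < q" "q < 1"
  shows "hahn_exton_coeff q r k = (1 - r * (q^2)^Suc k) * hahn_exton_coeff q (r * q^2) k"
proof -
  have "\<bar>q^2\<bar> < 1"
    using assms by (simp add: power_less_one_iff)
  then show ?thesis
    unfolding hahn_exton_coeff_def
    by (subst real_qpoch_inf_shift) (auto simp: mult_ac)
qed

lemma hahn_exton_coeff_div_q2:
  assumes "0 < q" "q < 1"
  shows "hahn_exton_coeff q (r / q^2) k = hahn_exton_coeff q r k * (1 - r * (q^2)^k)"
  using hahn_exton_coeff_param_shift[OF assms, of "r / q^2" k] assms by simp

lemma q_bessel_series_hahn_exton_coeff:
  assumes q: "0 < q" "q < 1" and r: "0 < r" "r * q^2 < 1"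
  shows "q_bessel_series q r (hahn_exton_coeff q r)"
proof
  have "\<bar>q^2\<bar> < 1" "\<bar>r * q^2\<bar> < 1"
    using q r by (simp_all add: power_less_one_iff)
  then show "hahn_exton_coeff q r 0 \<noteq> 0"
    unfolding hahn_exton_coeff_def by (simp add: real_qpoch_inf_nonzero)
  show "hahn_exton_coeff q r (Suc k) * (1 - (q^2)^Suc k) * (1 - r * (q^2)^Suc k)
          = - ((q^2)^Suc k) * hahn_exton_coeff q r k" for k
    unfolding hahn_exton_coeff_Suc[OF q] hahn_exton_coeff_param_shift[OF q, of r k] by simp
qed (use q r in auto)

lemma hahn_exton_J_series_term:
  assumes q: "0 < q" "q < 1"
  shows "(-1)^k * complex_of_real (q ^ (k * (k + 1))) *
      qpoch_inf (complex_of_real (q ^ (2 * k + 2))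
                 * exp ((2 * complex_of_real \<nu>) * Ln (complex_of_real q))) (q^2)
      / qpoch (complex_of_real (q^2)) (q^2) k * (complex_of_real y) ^ (2 * k)
      = complex_of_real (hahn_exton_coeff q (q powr (2 * \<nu>)) k * (y^2)^k)"
proof -
  have "exp ((2 * complex_of_real \<nu>) * Ln (complex_of_real q)) = complex_of_real (q powr (2 * \<nu>))"
    using powr_of_real[of q "2 * \<nu>"] q by (simp add: powr_def)
  moreover have "2 * k + 2 = 2 * Suc k"
    by simp
  then have "q ^ (2 * k + 2) = (q^2)^Suc k"
    by (simp only: power_mult)
  moreover have "\<bar>q^2\<bar> < 1"
    using q by (simp add: power_less_one_iff)
  ultimately have "qpoch_inf (complex_of_real (q ^ (2 * k + 2))
                             * exp ((2 * complex_of_real \<nu>) * Ln (complex_of_real q))) (q^2)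
       = complex_of_real (real_qpoch_inf (q powr (2 * \<nu>) * (q^2)^Suc k) (q^2))"
    by (simp only: of_real_mult[symmetric] qpoch_inf_of_real mult.commute)
  then show ?thesis
    unfolding hahn_exton_coeff_def qpoch_def by (simp add: power_mult)
qed

lemma hahn_exton_J_eq_0_iff:
  assumes q: "0 < q" "q < 1"
    and sums: "(\<lambda>k. hahn_exton_coeff q (q powr (2 * \<nu>)) k * (y^2)^k) sums s"
  shows "hahn_exton_J q (complex_of_real \<nu>) (complex_of_real y) = 0 \<longleftrightarrow> s = 0"
proof -
  have "(\<lambda>k. complex_of_real (hahn_exton_coeff q (q powr (2 * \<nu>)) k * (y^2)^k))
          sums complex_of_real s"
    using sums by (subst sums_of_real_iff)
  then have "hahn_exton_J q (complex_of_real \<nu>) (complex_of_real y)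
      = ppow (complex_of_real y) (complex_of_real \<nu>) / qpoch_inf (complex_of_real (q^2)) (q^2)
          * complex_of_real s"
    unfolding hahn_exton_J_def hahn_exton_J_series_term[OF q] by (simp add: sums_unique[symmetric])
  moreover have p: "\<bar>q^2\<bar> < 1"
    using q by (simp add: power_less_one_iff)
  then have "qpoch_inf (complex_of_real (q^2)) (q^2) \<noteq> 0"
    unfolding qpoch_inf_of_real[OF p] by (simp add: real_qpoch_inf_nonzero)
  ultimately show ?thesis
    by (simp add: ppow_def)
qed

locale hahn_exton =
  fixes q \<nu> :: real
  assumes q_range: "0 < q" "q < 1" and nu_gt: "-1 < \<nu>"
begin

lemma q_powr_bounds: "0 < q powr (2 * \<nu>)" "q powr (2 * \<nu>) * q^2 < 1"
proof -
  have "q powr (2 * \<nu>) * q^2 = q powr (2 * (\<nu> + 1))"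
    using q_range by (simp add: powr_add algebra_simps)
  also have "\<dots> < 1 powr (2 * (\<nu> + 1))"
    using q_range nu_gt by (intro powr_less_mono2) auto
  finally show "q powr (2 * \<nu>) * q^2 < 1"
    by simp
  show "0 < q powr (2 * \<nu>)"
    using q_range by simp
qed

sublocale q_bessel_series q "q powr (2 * \<nu>)" "hahn_exton_coeff q (q powr (2 * \<nu>))"
  using q_range q_powr_bounds by (rule q_bessel_series_hahn_exton_coeff)

lemma hahn_exton_J_eq_0_iff_f:
  "hahn_exton_J q (complex_of_real \<nu>) (complex_of_real x) = 0 \<longleftrightarrow> f x = 0"
  using hahn_exton_J_eq_0_iff[OF q_range F_sums] by (simp add: f_def)

lemma hahn_exton_J_succ_eq_0:
  assumes "x \<noteq> 0" "f x = f (x / q)"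
  shows "hahn_exton_J q (complex_of_real (\<nu> + 1)) (complex_of_real x) = 0"
proof -
  interpret succ: hahn_exton q "\<nu> + 1"
    using q_range nu_gt by unfold_locales auto
  have r_succ: "q powr (2 * (\<nu> + 1)) = q powr (2 * \<nu>) * q^2"
    using q_range by (simp add: powr_add algebra_simps)
  note summable_succ = succ.summable_coeff[unfolded r_succ]
  have "x^2 * (\<Sum>k. hahn_exton_coeff q (q powr (2 * \<nu>) * q^2) k * (x^2)^k) = 0"
    using contiguous_relation_raise[OF hahn_exton_coeff_Suc[OF q_range] summable_succ] assms(2)
    by simp
  then have "(\<Sum>k. hahn_exton_coeff q (q powr (2 * \<nu>) * q^2) k * (x^2)^k) = 0"
    using assms(1) by simp
  then show ?thesis
    using hahn_exton_J_eq_0_iff[OF q_range, of "\<nu> + 1", unfolded r_succ,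
        OF summable_sums[OF summable_succ]]
    by blast
qed

lemma hahn_exton_J_pred_eq_0:
  assumes "f x = q powr (2 * \<nu>) * f (q * x)"
  shows "hahn_exton_J q (complex_of_real (\<nu> - 1)) (complex_of_real x) = 0"
proof -
  have r_pred: "q powr (2 * (\<nu> - 1)) = q powr (2 * \<nu>) / q^2"
    using q_range by (simp add: powr_diff algebra_simps)
  have "f x - q powr (2 * \<nu>) * f (q * x) = 0"
    using assms by simp
  then show ?thesis
    using hahn_exton_J_eq_0_iff[OF q_range, of "\<nu> - 1", unfolded r_pred,
        OF contiguous_relation_lower[OF hahn_exton_coeff_div_q2[OF q_range]]]
    by blast
qed

end

theorem lemma3p6:
  fixes q nu a b :: real
  assumes q: "0 < q" "q < 1"
    and nu: "nu > -1"
    and ab: "0 < a" "a < b"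
    and za: "hahn_exton_J q (complex_of_real nu) (complex_of_real a) = 0"
    and zb: "hahn_exton_J q (complex_of_real nu) (complex_of_real b) = 0"
    and consec: "\<forall>x. a < x \<and> x < b \<longrightarrow> hahn_exton_J q (complex_of_real nu) (complex_of_real x) \<noteq> 0"
  shows "(\<exists>x. a < x \<and> x < b \<and> hahn_exton_J q (complex_of_real (nu - 1)) (complex_of_real x) = 0)
       \<and> (\<exists>x. a < x \<and> x < b \<and> hahn_exton_J q (complex_of_real (nu + 1)) (complex_of_real x) = 0)"
proof -
  interpret J: hahn_exton q nu
    using q nu by unfold_locales auto
  have fa: "J.f a = 0" and fb: "J.f b = 0" and nz: "\<And>x. a < x \<Longrightarrow> x < b \<Longrightarrow> J.f x \<noteq> 0"
    using za zb consec by (auto simp: J.hahn_exton_J_eq_0_iff_f)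
  obtain x1 where x1: "a < x1" "x1 < b" "J.f x1 = J.f (x1 / q)"
    using J.zeros_of_q_shifted_differences(1)[OF ab fa fb nz] by blast
  obtain x2 where x2: "a < x2" "x2 < b" "J.f x2 = q powr (2 * nu) * J.f (q * x2)"
    using J.zeros_of_q_shifted_differences(2)[OF ab fa fb nz] by blast
  have "x1 \<noteq> 0"
    using ab x1 by simp
  then show ?thesis
    using J.hahn_exton_J_succ_eq_0[OF _ x1(3)] J.hahn_exton_J_pred_eq_0[OF x2(3)] x1 x2 by blast
qed

end
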